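(* Let $n\geq 2$ and let $R$ be the unital associative ring $\langle x,y \mid x^n=0,\ y^n=0,\ xy+y^{n-1}x^{n-1}=1\rangle$. Then $R$ is generated as an additive group by the elements $y^ix^j$ for $0\leq i,j<n$.
   Context: $R$ denotes the quotient of the free unital associative ring $\mathbb{Z}\langle x,y\rangle$ by the two-sided ideal generated by $x^n$, $y^n$ and $xy+y^{n-1}x^{n-1}-1$; $x^0=y^0=1$. *)

theory Defs
  imports Main
begin

text \<open>It is the image of the free ring Z<x,y>
  under the evaluation homomorphism X |-> x, Y |-> y.\<close>

inductive_set ring_gen :: "'a::ring_1 \<Rightarrow> 'a \<Rightarrow> 'a set" for x y :: "'a::ring_1" where
  zero: "0 \<in> ring_gen x y"
| one:  "1 \<in> ring_gen x y"
| genx: "x \<in> ring_gen x y"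
| geny: "y \<in> ring_gen x y"
| add:  "a \<in> ring_gen x y \<Longrightarrow> b \<in> ring_gen x y \<Longrightarrow> a + b \<in> ring_gen x y"
| neg:  "a \<in> ring_gen x y \<Longrightarrow> - a \<in> ring_gen x y"
| mult: "a \<in> ring_gen x y \<Longrightarrow> b \<in> ring_gen x y \<Longrightarrow> a * b \<in> ring_gen x y"

end

theory Submission
  imports Defs
begin

text \<open>Since every element of the subring generated by x and y is a polynomial in x and y,
  it suffices to show that the additive group spanned by the monomials y^i x^j is stable
  under left multiplication by x and y. For y this is clear; for x the relation gives the
  normal form x y^i = y^(i-1) - y^(n-1) x^(n-i), which rests on the identity
  y^(n-1) x^m y^m = y^(n-1) for m < n. Nilpotency then discards the monomials with i \<ge> n
  or j \<ge> n.\<close>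

lemma ring_gen_subset_if_left_mult_closed:
  fixes A :: "'a::ring_1 set"
  assumes one: "1 \<in> A"
    and add_closed: "\<And>a b. a \<in> A \<Longrightarrow> b \<in> A \<Longrightarrow> a + b \<in> A"
    and neg_closed: "\<And>a. a \<in> A \<Longrightarrow> - a \<in> A"
    and x_mult: "\<And>a. a \<in> A \<Longrightarrow> x * a \<in> A"
    and y_mult: "\<And>a. a \<in> A \<Longrightarrow> y * a \<in> A"
  shows "ring_gen x y \<subseteq> A"
proof -
  have "z * a \<in> A" if "z \<in> ring_gen x y" "a \<in> A" for z a
    using that
  proof (induction arbitrary: a rule: ring_gen.induct)
    case zero
    have "a + - a \<in> A" using zero add_closed neg_closed by blast
    then show ?case by simp
  next
    case (add b c)
    then show ?case by (simp add: distrib_right add_closed)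
  next
    case (neg b)
    then show ?case by (simp add: neg_closed)
  next
    case (mult b c)
    then show ?case by (simp add: mult.assoc)
  qed (simp_all add: x_mult y_mult)
  then show ?thesis using one by fastforce
qed

lemma power_eq_0_if_le: "(z::'a::{monoid_mult,mult_zero}) ^ n = 0 \<Longrightarrow> n \<le> k \<Longrightarrow> z ^ k = 0"
  by (metis le_add_diff_inverse mult_zero_left power_add)

inductive_set monomial_group :: "'a::ring_1 \<Rightarrow> 'a \<Rightarrow> 'a set" for x y :: 'a where
  monomial: "y ^ i * x ^ j \<in> monomial_group x y"
| zero: "0 \<in> monomial_group x y"
| add: "a \<in> monomial_group x y \<Longrightarrow> b \<in> monomial_group x y \<Longrightarrow> a + b \<in> monomial_group x y"
| neg: "a \<in> monomial_group x y \<Longrightarrow> - a \<in> monomial_group x y"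

lemma y_mult_monomial_group: "a \<in> monomial_group x y \<Longrightarrow> y * a \<in> monomial_group x y"
proof (induction rule: monomial_group.induct)
  case (monomial i j)
  then show ?case using monomial_group.monomial[of y "Suc i" x j] by (simp add: mult.assoc)
qed (auto simp: distrib_left intro: monomial_group.intros)

context
  fixes n :: nat and x y :: "'a::ring_1"
  assumes x_nilpotent: "x ^ n = 0" and y_nilpotent: "y ^ n = 0"
    and relation: "x * y + y ^ (n - 1) * x ^ (n - 1) = 1"
begin

lemma x_mult_y: "x * y = 1 - y ^ (n - 1) * x ^ (n - 1)"
  using relation by (metis add_diff_cancel_right')

lemma y_top_x_power_y_top_eq_0:
  assumes "m < n - 1" and cancel: "y ^ (n - 1) * x ^ m * y ^ m = y ^ (n - 1)"
  shows "y ^ (n - 1) * x ^ m * y ^ (n - 1) = 0"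
proof -
  have "y ^ (n - 1) * x ^ m * y ^ (n - 1) = y ^ (n - 1) * x ^ m * y ^ m * y ^ (n - 1 - m)"
    using \<open>m < n - 1\<close> by (simp add: mult.assoc flip: power_add)
  also have "\<dots> = y ^ (n - 1 + (n - 1 - m))" using cancel by (simp add: power_add)
  also have "\<dots> = 0" using \<open>m < n - 1\<close> by (intro power_eq_0_if_le[OF y_nilpotent]) simp
  finally show ?thesis .
qed

lemma y_top_x_power_y_power: "m \<le> n - 1 \<Longrightarrow> y ^ (n - 1) * x ^ m * y ^ m = y ^ (n - 1)"
proof (induction m)
  case 0
  then show ?case by simp
next
  case (Suc m)
  then have IH: "y ^ (n - 1) * x ^ m * y ^ m = y ^ (n - 1)" by simp
  have "y ^ (n - 1) * x ^ Suc m * y ^ Suc m = y ^ (n - 1) * x ^ m * (x * y) * y ^ m"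
    by (simp only: power_Suc2[of x m] power_Suc[of y m] mult.assoc)
  also have "\<dots> = y ^ (n - 1) * x ^ m * y ^ m
      - y ^ (n - 1) * x ^ m * y ^ (n - 1) * x ^ (n - 1) * y ^ m"
    by (simp only: x_mult_y right_diff_distrib left_diff_distrib mult_1_right mult.assoc)
  also have "\<dots> = y ^ (n - 1)"
    using IH y_top_x_power_y_top_eq_0[of m] Suc.prems by simp
  finally show ?case .
qed

lemma x_mult_y_power: "1 \<le> i \<Longrightarrow> i \<le> n \<Longrightarrow> x * y ^ i = y ^ (i - 1) - y ^ (n - 1) * x ^ (n - i)"
proof (induction i rule: nat_induct_at_least)
  case base
  then show ?case using x_mult_y by simp
next
  case (Suc i)
  then have IH: "x * y ^ i = y ^ (i - 1) - y ^ (n - 1) * x ^ (n - i)" by simp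
  have x_power: "x ^ (n - i) = x ^ (n - Suc i) * x"
    using Suc.prems by (simp flip: power_Suc2 add: Suc_diff_Suc)
  have y_power: "y ^ (i - 1) * y = y ^ i"
    using Suc.hyps by (simp flip: power_Suc2)
  have "x * y ^ Suc i = (x * y ^ i) * y" by (simp add: mult.assoc flip: power_Suc2)
  also have "\<dots> = y ^ i - y ^ (n - 1) * x ^ (n - Suc i) * (x * y)"
    by (simp only: IH x_power y_power left_diff_distrib mult.assoc)
  also have "\<dots> = y ^ i - y ^ (n - 1) * x ^ (n - Suc i)
      + y ^ (n - 1) * x ^ (n - Suc i) * y ^ (n - 1) * x ^ (n - 1)"
    by (simp only: x_mult_y right_diff_distrib left_diff_distrib mult_1_right mult.assoc
        diff_diff_eq2 diff_add_eq)
  also have "\<dots> = y ^ i - y ^ (n - 1) * x ^ (n - Suc i)"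
    using y_top_x_power_y_top_eq_0[of "n - Suc i"] y_top_x_power_y_power[of "n - Suc i"]
      Suc.prems Suc.hyps by simp
  finally show ?case by simp
qed

lemma x_mult_monomial: "x * (y ^ i * x ^ j) \<in> monomial_group x y"
proof (cases "i = 0")
  case True
  then show ?thesis using monomial_group.monomial[of y 0 x "Suc j"] by simp
next
  case i_pos: False
  show ?thesis
  proof (cases "i \<le> n")
    case True
    have "x * (y ^ i * x ^ j) = (y ^ (i - 1) - y ^ (n - 1) * x ^ (n - i)) * x ^ j"
      using x_mult_y_power[of i] True i_pos by (simp flip: mult.assoc)
    also have "\<dots> = y ^ (i - 1) * x ^ j + - (y ^ (n - 1) * x ^ (n - i + j))"
      by (simp add: left_diff_distrib mult.assoc power_add)
    finally show ?thesis by (metis monomial_group.intros)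
  next
    case False
    then show ?thesis using power_eq_0_if_le[OF y_nilpotent, of i] monomial_group.zero by simp
  qed
qed

lemma x_mult_monomial_group: "a \<in> monomial_group x y \<Longrightarrow> x * a \<in> monomial_group x y"
  by (induction rule: monomial_group.induct)
    (auto simp: x_mult_monomial distrib_left intro: monomial_group.intros)

lemma ring_gen_subset_monomial_group: "ring_gen x y \<subseteq> monomial_group x y"
  using monomial_group.monomial[of y 0 x 0]
  by (intro ring_gen_subset_if_left_mult_closed)
    (simp_all add: monomial_group.add monomial_group.neg x_mult_monomial_group y_mult_monomial_group)

end

definition int_combinations :: "nat \<Rightarrow> 'a::ring_1 \<Rightarrow> 'a \<Rightarrow> 'a set" where
  "int_combinations n x y =
     {z. \<exists>c :: nat \<Rightarrow> nat \<Rightarrow> int. z = (\<Sum>i<n. \<Sum>j<n. of_int (c i j) * (y ^ i * x ^ j))}"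

lemma zero_in_int_combinations: "0 \<in> int_combinations n x y"
  unfolding int_combinations_def by (intro CollectI exI[of _ "\<lambda>_ _. 0"]) simp

lemma add_in_int_combinations:
  assumes "a \<in> int_combinations n x y" "b \<in> int_combinations n x y"
  shows "a + b \<in> int_combinations n x y"
proof -
  obtain c d where "a = (\<Sum>i<n. \<Sum>j<n. of_int (c i j) * (y ^ i * x ^ j))"
    and "b = (\<Sum>i<n. \<Sum>j<n. of_int (d i j) * (y ^ i * x ^ j))"
    using assms unfolding int_combinations_def by blast
  then show ?thesis unfolding int_combinations_def
    by (intro CollectI exI[of _ "\<lambda>i j. c i j + d i j"])
      (simp only: of_int_add distrib_right sum.distrib)
qed

lemma neg_in_int_combinations:
  assumes "a \<in> int_combinations n x y"
  shows "- a \<in> int_combinations n x y"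
proof -
  obtain c where "a = (\<Sum>i<n. \<Sum>j<n. of_int (c i j) * (y ^ i * x ^ j))"
    using assms unfolding int_combinations_def by blast
  then show ?thesis unfolding int_combinations_def
    by (intro CollectI exI[of _ "\<lambda>i j. - c i j"])
      (simp only: of_int_minus mult_minus_left sum_negf)
qed

lemma monomial_in_int_combinations:
  assumes "i < n" "j < n"
  shows "y ^ i * x ^ j \<in> int_combinations n x y"
proof -
  let ?c = "\<lambda>a b. if a = i \<and> b = j then 1 else 0 :: int"
  have "of_int (?c a b) * (y ^ a * x ^ b) = (if b = j then if a = i then y ^ a * x ^ b else 0 else 0)"
    for a b by simp
  then have "(\<Sum>a<n. \<Sum>b<n. of_int (?c a b) * (y ^ a * x ^ b)) = y ^ i * x ^ j"
    using assms by (simp add: sum.delta)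
  then show ?thesis unfolding int_combinations_def by (intro CollectI exI[of _ ?c]) simp
qed

lemma monomial_group_subset_int_combinations:
  fixes x y :: "'a::ring_1"
  assumes "x ^ n = 0" "y ^ n = 0"
  shows "monomial_group x y \<subseteq> int_combinations n x y"
proof
  fix z assume "z \<in> monomial_group x y"
  then show "z \<in> int_combinations n x y"
  proof (induction rule: monomial_group.induct)
    case (monomial i j)
    show ?case
    proof (cases "i < n \<and> j < n")
      case True
      then show ?thesis by (simp add: monomial_in_int_combinations)
    next
      case False
      then have "y ^ i * x ^ j = 0"
        using power_eq_0_if_le[OF assms(2), of i] power_eq_0_if_le[OF assms(1), of j] by force
      then show ?thesis by (simp add: zero_in_int_combinations)
    qed
  qed (simp_all add: zero_in_int_combinations add_in_int_combinations neg_in_int_combinations)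
qed

theorem lemma2:
  fixes n :: nat and x y :: "'a::ring_1"
  assumes "n \<ge> 2"
    and "x ^ n = 0" and "y ^ n = 0"
    and "x * y + y ^ (n - 1) * x ^ (n - 1) = 1"
  shows "\<forall>z \<in> ring_gen x y. \<exists>c :: nat \<Rightarrow> nat \<Rightarrow> int.
           z = (\<Sum>i<n. \<Sum>j<n. of_int (c i j) * (y ^ i * x ^ j))"
proof -
  have "ring_gen x y \<subseteq> monomial_group x y"
    by (rule ring_gen_subset_monomial_group[OF assms(2-4)])
  also have "\<dots> \<subseteq> int_combinations n x y"
    by (rule monomial_group_subset_int_combinations[OF assms(2,3)])
  finally show ?thesis unfolding int_combinations_def by blast
qed

end
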